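(* Let $p$ be a positive integer, let $T$ be a complete rooted ternary tree, let $H$ be a connected graph with at least $2p$ vertices, and let $V\subseteq V(T(H))$ with $|OC(T,V)|\geq p$. Let $x=tr(|OC(T,V)|)$ and let $SV$ be an ordering (permutation) of $V$. Then $T(H)$ has a witnessing matching for $SV$ of size at least $p\cdot\lfloor (x-tr(p))/2\rfloor$.
   Context: Complete rooted ternary tree of height $h$: a rooted tree in which every root-leaf path has exactly $h$ edges and every non-leaf vertex has exactly 3 children. For real $x\geq 1$, $tr(x)$ is the largest integer $h\geq 0$ such that a complete rooted ternary tree of height $h$ has at most $x$ vertices. Graph $T(H)$: for a tree $T$ and a graph $H$ with $V(H)=\{1,\dots,m\}$, $T(H)$ has vertex set $\{v^i: v\in V(T), 1\le i\le m\}$; for each $v\in V(T)$ the vertices $v^1,\dots,v^m$ span a copy $H^v$ of $H$ ($v^iv^j$ is an edge iff $ij\in E(H)$), and additionally $u^iv^i$ is an edge for each $i$ whenever $uv\in E(T)$. For $V\subseteq V(T(H))$, $OC(T,V)=\{u\in V(T): V(H^u)\cap V\neq\emptyset\}$. Witnessing matching: let $G$ be a graph, $V\subseteq V(G)$ and $SV$ an ordering of $V$. A partition of $SV$ into a prefix $SV_1$ and a suffix $SV_2$ (either may be empty) supports an edge $\{u,v\}$ if either one endpoint lies in $SV_1$ and the other in $SV_2$, or one endpoint lies in $V$ and the other in $V(G)\setminus V$. A matching $M$ of $G$ is witnessing for $SV$ if some partition of $SV$ into a prefix and a suffix supports every edge of $M$. *)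

theory Defs
  imports Main
begin

definition simple_graph :: "'a set \<Rightarrow> 'a set set \<Rightarrow> bool" where
  "simple_graph V E \<longleftrightarrow> (\<forall>e\<in>E. \<exists>u v. e = {u, v} \<and> u \<noteq> v \<and> u \<in> V \<and> v \<in> V)"

definition connected_graph :: "'a set \<Rightarrow> 'a set set \<Rightarrow> bool" where
  "connected_graph V E \<longleftrightarrow> V \<noteq> {} \<and>
     (\<forall>u\<in>V. \<forall>v\<in>V. (u, v) \<in> {(x, y). {x, y} \<in> E}\<^sup>*)"

(* canonical complete rooted ternary tree of height h: vertices are words over {0,1,2}
   of length at most h (root = []), the parent of i#xs is xs *)
definition ctt_verts :: "nat \<Rightarrow> nat list set" where
  "ctt_verts h = {xs. length xs \<le> h \<and> set xs \<subseteq> {0, 1, 2}}"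

definition ctt_edges :: "nat \<Rightarrow> nat list set set" where
  "ctt_edges h = {{xs, i # xs} | xs i. i \<in> {0, 1, 2} \<and> i # xs \<in> ctt_verts h}"

definition complete_ternary_tree :: "'a set \<Rightarrow> 'a set set \<Rightarrow> nat \<Rightarrow> bool" where
  "complete_ternary_tree VT ET h \<longleftrightarrow> simple_graph VT ET \<and>
     (\<exists>f. bij_betw f VT (ctt_verts h) \<and>
          (\<forall>u\<in>VT. \<forall>v\<in>VT. {u, v} \<in> ET \<longleftrightarrow> {f u, f v} \<in> ctt_edges h))"

(* tr x: the largest h such that the complete ternary tree of height h has at most x vertices;
   that tree has 1 + 3 + ... + 3^h vertices *)
definition tr :: "nat \<Rightarrow> nat" where
  "tr x = Max {h. (\<Sum>i\<le>h. (3::nat) ^ i) \<le> x}"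

(* the graph T(H), where V(H) = {1..m} *)
definition TH_verts :: "'a set \<Rightarrow> nat \<Rightarrow> ('a \<times> nat) set" where
  "TH_verts VT m = VT \<times> {1..m}"

definition TH_edges :: "'a set \<Rightarrow> 'a set set \<Rightarrow> nat \<Rightarrow> nat set set \<Rightarrow> ('a \<times> nat) set set" where
  "TH_edges VT ET m EH =
     {{(v, i), (v, j)} | v i j. v \<in> VT \<and> {i, j} \<in> EH} \<union>
     {{(u, i), (v, i)} | u v i. {u, v} \<in> ET \<and> i \<in> {1..m}}"

definition OC :: "'a set \<Rightarrow> ('a \<times> nat) set \<Rightarrow> 'a set" where
  "OC VT V = {u \<in> VT. \<exists>i. (u, i) \<in> V}"

definition is_matching :: "'b set set \<Rightarrow> 'b set set \<Rightarrow> bool" where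
  "is_matching EG M \<longleftrightarrow> M \<subseteq> EG \<and> (\<forall>e\<in>M. \<forall>e'\<in>M. e \<noteq> e' \<longrightarrow> e \<inter> e' = {})"

definition supports :: "'b set \<Rightarrow> 'b list \<Rightarrow> nat \<Rightarrow> 'b set \<Rightarrow> bool" where
  "supports VG SV k e \<longleftrightarrow> (\<exists>u v. e = {u, v} \<and>
     ((u \<in> set (take k SV) \<and> v \<in> set (drop k SV)) \<or>
      (u \<in> set SV \<and> v \<in> VG - set SV)))"

definition witnessing :: "'b set \<Rightarrow> 'b set set \<Rightarrow> 'b list \<Rightarrow> 'b set set \<Rightarrow> bool" where
  "witnessing VG EG SV M \<longleftrightarrow> is_matching EG M \<and>
     (\<exists>k\<le>length SV. \<forall>e\<in>M. supports VG SV k e)"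

end

theory Submission
  imports Defs
begin

(*
  Transport the problem along the isomorphism between T and the canonical tree of words over
  {0, 1, 2}. For a split of SV after its first k entries, every vertex of T(H) lies in the prefix,
  in the suffix, or outside V, and an edge joining two different sides is supported by the split.
  Call a set R of tree vertices balanced at k if none of the three sides fills more than m - p of
  the rows R x {i}, and sparse if more than m - p rows avoid V. A balanced parent-closed R with at
  least p vertices carries p disjoint two-sided edges, found along rows (tree edges) or inside
  fibres {u} x {1..m} (using that H is connected); in a sparse R every occupied fibre carries one.

  By induction over subtrees, every non-sparse subtree S is balanced at some split that carries a
  two-sided matching of size g(|OC \<inter> S|), where g(n) counts the integers below n lying in the
  windows [s j, s j + p), s j being the size of a complete ternary tree of height tr p + 2j + 1.
  The step keeps the split of the most occupied non-sparse child and adds either p edges from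
  the rest of S or one edge per occupied fibre of its sparse siblings; only when all three
  children are non-sparse and fully occupied is the median of their splits used instead. The
  bound g(3a + 1) \<le> g(a) + p, true because consecutive windows grow by a factor 9, pays for
  the extra level. Finally g(N) \<ge> p * ((tr N - tr p) div 2), since the first (tr N - tr p) div 2
  windows lie below the size of the tree of height tr N, which is at most N.
*)

section \<open>Sizes of complete ternary trees\<close>

definition ctt_size :: "nat \<Rightarrow> nat" where
  "ctt_size h = (\<Sum>i\<le>h. (3::nat) ^ i)"

lemma ctt_size_0 [simp]: "ctt_size 0 = 1"
  by (simp add: ctt_size_def)

lemma ctt_size_Suc: "ctt_size (Suc h) = 3 * ctt_size h + 1"
  by (induction h) (simp_all add: ctt_size_def)

lemma strict_mono_ctt_size: "strict_mono ctt_size"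
  by (simp add: strict_mono_Suc_iff ctt_size_Suc)

lemma ctt_size_less_iff [simp]: "ctt_size g < ctt_size h \<longleftrightarrow> g < h"
  by (rule strict_mono_less[OF strict_mono_ctt_size])

lemma ctt_size_le_iff [simp]: "ctt_size g \<le> ctt_size h \<longleftrightarrow> g \<le> h"
  by (rule strict_mono_less_eq[OF strict_mono_ctt_size])

lemma less_ctt_size: "h < ctt_size h"
  by (induction h) (auto simp: ctt_size_Suc)

lemma
  assumes "0 < n"
  shows ctt_size_tr_le: "ctt_size (tr n) \<le> n"
    and less_ctt_size_Suc_tr: "n < ctt_size (Suc (tr n))"
proof -
  let ?S = "{h. ctt_size h \<le> n}"
  have tr_eq: "tr n = Max ?S"
    by (simp add: tr_def ctt_size_def)
  have "?S \<subseteq> {..n}"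
    using less_ctt_size by (auto intro: less_imp_le order.strict_trans2)
  then have fin: "finite ?S"
    by (rule finite_subset) simp
  have "0 \<in> ?S"
    using assms by simp
  then show "ctt_size (tr n) \<le> n"
    using Max_in[OF fin] tr_eq by (metis empty_iff mem_Collect_eq)
  show "n < ctt_size (Suc (tr n))"
    using Max_ge[OF fin, of "Suc (tr n)"] tr_eq by (auto simp: not_less[symmetric])
qed

section \<open>Counting integers in windows\<close>

definition window_start :: "nat \<Rightarrow> nat \<Rightarrow> nat" where
  "window_start q j = ctt_size (q + 2 * j + 1)"

definition windows :: "nat \<Rightarrow> nat \<Rightarrow> nat set" where
  "windows p q = (\<Union>j. {window_start q j..<window_start q j + p})"

definition window_count :: "nat \<Rightarrow> nat \<Rightarrow> nat \<Rightarrow> nat" where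
  "window_count p q n = card ({..<n} \<inter> windows p q)"

lemma window_start_Suc: "window_start q (Suc j) = 9 * window_start q j + 4"
  by (simp add: window_start_def ctt_size_Suc)

lemma window_start_le_iff [simp]: "window_start q i \<le> window_start q j \<longleftrightarrow> i \<le> j"
  by (simp add: window_start_def)

lemma window_start_gap:
  assumes "p < window_start q 0" "i < j"
  shows "window_start q i + p < window_start q j"
proof -
  have "window_start q 0 \<le> window_start q i"
    by simp
  then have "window_start q i + p < window_start q (Suc i)"
    using assms(1) window_start_Suc[of q i] by linarith
  also have "\<dots> \<le> window_start q j"
    using assms(2) by simp
  finally show ?thesis .
qed

lemma window_unique:
  assumes "p < window_start q 0"
    and "i \<in> {window_start q j..<window_start q j + p}" "i \<in> {window_start q j'..<window_start q j' + p}"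
  shows "j = j'"
  using window_start_gap[OF assms(1), of j j'] window_start_gap[OF assms(1), of j' j] assms(2,3)
  by (cases j j' rule: linorder_cases) auto

lemma window_count_mono: "a \<le> b \<Longrightarrow> window_count p q a \<le> window_count p q b"
  unfolding window_count_def by (rule card_mono) auto

lemma window_count_add_le: "window_count p q (b + c) \<le> window_count p q b + c"
proof -
  have "{..<b + c} \<inter> windows p q \<subseteq> ({..<b} \<inter> windows p q) \<union> {b..<b + c}"
    by auto
  then have "window_count p q (b + c) \<le> card (({..<b} \<inter> windows p q) \<union> {b..<b + c})"
    unfolding window_count_def by (intro card_mono) auto
  also have "\<dots> \<le> window_count p q b + c"
    unfolding window_count_def using card_Un_le[of "{..<b} \<inter> windows p q" "{b..<b + c}"] by simp
  finally show ?thesis .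
qed

lemma window_count_le: "window_count p q n \<le> n"
  using window_count_add_le[of p q 0 n] by (simp add: window_count_def)

lemma window_count_eq_0:
  assumes "n \<le> window_start q 0"
  shows "window_count p q n = 0"
proof -
  have "window_start q 0 \<le> window_start q j" for j
    by simp
  then have "{..<n} \<inter> windows p q = {}"
    using assms unfolding windows_def by (auto simp del: window_start_le_iff) (meson leD order.trans)
  then show ?thesis
    by (simp add: window_count_def)
qed

lemma window_count_ctt_size:
  assumes "p < window_start q 0"
  shows "p * t \<le> window_count p q (ctt_size (q + 2 * t))"
proof (induction t)
  case (Suc t)
  let ?A = "{..<ctt_size (q + 2 * t)} \<inter> windows p q"
  let ?W = "{window_start q t..<window_start q t + p}"
  have below: "ctt_size (q + 2 * t) \<le> window_start q t"
    by (simp add: window_start_def)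
  have "window_start q 0 \<le> window_start q t"
    by simp
  moreover have "ctt_size (q + 2 * Suc t) = 3 * window_start q t + 1"
    using ctt_size_Suc[of "q + 2 * t + 1"] by (simp add: window_start_def)
  ultimately have above: "window_start q t + p \<le> ctt_size (q + 2 * Suc t)"
    using assms by linarith
  have "?A \<union> ?W \<subseteq> {..<ctt_size (q + 2 * Suc t)} \<inter> windows p q"
    using below above order.trans[OF ctt_size_le_iff[THEN iffD2] below, of "q + 2 * t"]
    unfolding windows_def by (auto simp del: ctt_size_le_iff)
  then have "card (?A \<union> ?W) \<le> window_count p q (ctt_size (q + 2 * Suc t))"
    unfolding window_count_def by (intro card_mono) auto
  moreover have "card (?A \<union> ?W) = window_count p q (ctt_size (q + 2 * t)) + p"
    unfolding window_count_def using below by (subst card_Un_disjoint) auto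
  ultimately show ?case
    using Suc by simp
qed simp

lemma window_count_gap:
  assumes "p < window_start q 0"
  shows "window_count p q (b + c + 1) \<le> window_count p q b + max p c"
proof (cases "{b..b + c} \<subseteq> windows p q")
  case False
  then obtain i where i: "i \<in> {b..b + c}" "i \<notin> windows p q"
    by blast
  then have "{..<b + c + 1} \<inter> windows p q \<subseteq> ({..<b} \<inter> windows p q) \<union> ({b..b + c} - {i})"
    by auto
  then have "window_count p q (b + c + 1) \<le> card (({..<b} \<inter> windows p q) \<union> ({b..b + c} - {i}))"
    unfolding window_count_def by (intro card_mono) auto
  also have "\<dots> \<le> window_count p q b + card ({b..b + c} - {i})"
    unfolding window_count_def by (rule card_Un_le)
  also have "card ({b..b + c} - {i}) = c"
    using i(1) by simp
  finally show ?thesis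
    by simp
next
  case True
  then have "b \<in> windows p q"
    by auto
  then obtain j where j: "b \<in> {window_start q j..<window_start q j + p}"
    unfolding windows_def by blast
  have "c < p"
  proof (rule ccontr)
    assume "\<not> c < p"
    then have "window_start q j + p \<in> windows p q"
      using True j by auto
    then obtain j' where j': "window_start q j + p \<in> {window_start q j'..<window_start q j' + p}"
      unfolding windows_def by blast
    show False
    proof (cases "j' \<le> j")
      case True
      then have "window_start q j' \<le> window_start q j"
        by simp
      moreover have "window_start q j < window_start q j'"
        using j' by simp
      ultimately show False
        by linarith
    next
      case False
      then show False
        using j' window_start_gap[OF assms, of j j'] by simp
    qed
  qed
  then show ?thesis
    using window_count_add_le[of p q b "c + 1"] by simp
qed

lemma window_shift_down:
  assumes "p < window_start q 0" and i: "i \<in> {window_start q (Suc j)..<window_start q (Suc j) + p}" "i < 3 * b + 1"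
  shows "i - window_start q (Suc j) + window_start q j \<in> {window_start q j..<window_start q j + p}"
    and "i - window_start q (Suc j) + window_start q j < b"
proof -
  have "window_start q 0 \<le> window_start q j"
    by simp
  moreover have "window_start q (Suc j) = 9 * window_start q j + 4"
    by (rule window_start_Suc)
  ultimately show "i - window_start q (Suc j) + window_start q j \<in> {window_start q j..<window_start q j + p}"
    and "i - window_start q (Suc j) + window_start q j < b"
    using assms unfolding atLeastLessThan_iff by arith+
qed

lemma window_count_triple:
  assumes "p < window_start q 0"
  shows "window_count p q (3 * b + 1) \<le> window_count p q b + p"
proof -
  let ?W = "\<lambda>j. {window_start q j..<window_start q j + p}"
  define A where "A = {..<3 * b + 1} \<inter> windows p q"
  define B where "B = {..<b} \<inter> windows p q"
  define index where "index i = (SOME j. i \<in> ?W j)" for i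
  define shift where "shift i = i + window_start q (Suc (index i)) - window_start q (index i)" for i
  have "A - ?W 0 \<subseteq> shift ` B"
  proof
    fix i
    assume i: "i \<in> A - ?W 0"
    then obtain j0 where j0: "i \<in> ?W j0" "i < 3 * b + 1"
      unfolding A_def windows_def by blast
    moreover have "j0 \<noteq> 0"
      using i j0 by (metis DiffD2)
    ultimately obtain j where j: "i \<in> ?W (Suc j)" "i < 3 * b + 1"
      by (metis not0_implies_Suc)
    define i' where "i' = i - window_start q (Suc j) + window_start q j"
    have i'W: "i' \<in> ?W j" and "i' < b"
      using window_shift_down[OF assms j] unfolding i'_def by auto
    then have "i' \<in> B"
      unfolding B_def windows_def by blast
    have "i' \<in> ?W (index i')"
      unfolding index_def by (rule someI[of _ j]) (rule i'W)
    then have "index i' = j"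
      using window_unique[OF assms _ i'W] by blast
    then have "shift i' = i"
      unfolding shift_def i'_def using j(1) by auto
    then show "i \<in> shift ` B"
      using \<open>i' \<in> B\<close> by blast
  qed
  then have "card (A - ?W 0) \<le> card B"
    using card_mono[of "shift ` B"] card_image_le[of B shift] unfolding B_def by (meson finite_Int finite_imageI finite_lessThan order.trans)
  moreover have "card A \<le> card (?W 0 \<union> (A - ?W 0))"
    unfolding A_def by (intro card_mono) auto
  then have "card A \<le> p + card (A - ?W 0)"
    using card_Un_le[of "?W 0" "A - ?W 0"] by simp
  ultimately show ?thesis
    unfolding window_count_def A_def B_def by linarith
qed

section \<open>Subtrees of the canonical ternary tree\<close>

lemma finite_ctt_verts: "finite (ctt_verts h)"
  unfolding ctt_verts_def
  by (rule finite_subset[OF _ finite_lists_length_le[of "{0, 1, 2 :: nat}" h]]) auto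

lemma Cons_in_ctt_verts: "w \<in> ctt_verts h \<Longrightarrow> length w < h \<Longrightarrow> i < 3 \<Longrightarrow> i # w \<in> ctt_verts h"
  unfolding ctt_verts_def by auto

lemma tl_in_ctt_verts: "u \<in> ctt_verts h \<Longrightarrow> tl u \<in> ctt_verts h"
  unfolding ctt_verts_def by (cases u) auto

lemma ctt_parent_edge: "u \<in> ctt_verts h \<Longrightarrow> u \<noteq> [] \<Longrightarrow> {tl u, u} \<in> ctt_edges h"
  unfolding ctt_edges_def ctt_verts_def by (cases u) auto

lemma simple_graph_ctt: "simple_graph (ctt_verts h) (ctt_edges h)"
  unfolding simple_graph_def ctt_edges_def using tl_in_ctt_verts[of "_ # _" h] by fastforce

lemma three_children:
  fixes x y z :: nat
  assumes "distinct [x, y, z]" "{x, y, z} \<subseteq> {..<3}"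
  shows "{x, y, z} = {..<3}"
proof (rule card_subset_eq)
  show "card {x, y, z} = card {..<3 :: nat}"
    using assms(1) by simp
qed (use assms(2) in simp_all)

definition subtree :: "nat \<Rightarrow> nat list \<Rightarrow> nat list set" where
  "subtree h w = {u \<in> ctt_verts h. \<exists>ys. u = ys @ w}"

lemma subtree_subset: "subtree h w \<subseteq> ctt_verts h"
  unfolding subtree_def by auto

lemma finite_subtree: "finite (subtree h w)"
  using finite_subset[OF subtree_subset finite_ctt_verts] .

lemma subtree_Cons_subset: "subtree h (i # w) \<subseteq> subtree h w"
  unfolding subtree_def by (auto intro: exI[of _ "_ @ [i]"])

lemma root_in_subtree: "w \<in> ctt_verts h \<Longrightarrow> w \<in> subtree h w"
  unfolding subtree_def by auto

lemma root_notin_subtree_Cons: "w \<notin> subtree h (i # w)"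
  unfolding subtree_def by auto

lemma subtree_leaf: "w \<in> ctt_verts h \<Longrightarrow> length w = h \<Longrightarrow> subtree h w = {w}"
  unfolding subtree_def ctt_verts_def by auto

lemma subtree_Cons_disjoint:
  assumes "i \<noteq> j"
  shows "subtree h (i # w) \<inter> subtree h (j # w) = {}"
proof (rule ccontr)
  assume "subtree h (i # w) \<inter> subtree h (j # w) \<noteq> {}"
  then obtain ys zs where eq: "ys @ i # w = zs @ j # w"
    unfolding subtree_def by auto
  then have "length ys = length zs"
    by (metis add_right_cancel length_Cons length_append)
  then show False
    using eq assms by simp
qed

lemma tl_in_subtree:
  assumes "u \<in> subtree h w" "u \<noteq> w"
  shows "tl u \<in> subtree h w"
proof -
  obtain ys where u: "u \<in> ctt_verts h" "u = ys @ w"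
    using assms(1) unfolding subtree_def by auto
  then have "tl u = tl ys @ w"
    using assms(2) by (cases ys) auto
  then show ?thesis
    using tl_in_ctt_verts[OF u(1)] unfolding subtree_def by auto
qed

lemma in_subtree_if_tl_in_subtree:
  assumes "tl u \<in> subtree h w" "u \<in> ctt_verts h" "u \<noteq> []"
  shows "u \<in> subtree h w"
proof -
  obtain ys where "tl u = ys @ w"
    using assms(1) unfolding subtree_def by auto
  then have "u = (hd u # ys) @ w"
    using assms(3) list.collapse[of u] by simp
  then show ?thesis
    using assms(2) unfolding subtree_def by blast
qed

lemma subtree_eq_children:
  assumes "w \<in> ctt_verts h" "length w < h"
  shows "subtree h w = insert w (\<Union>i<3. subtree h (i # w))"
proof (intro equalityI subsetI)
  fix u
  assume "u \<in> subtree h w"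
  then obtain ys where u: "u \<in> ctt_verts h" "u = ys @ w"
    unfolding subtree_def by auto
  show "u \<in> insert w (\<Union>i<3. subtree h (i # w))"
  proof (cases ys rule: rev_cases)
    case (snoc zs i)
    then have "i < 3"
      using u unfolding ctt_verts_def by auto
    then show ?thesis
      using u snoc unfolding subtree_def by auto
  qed (use u in simp)
next
  fix u
  assume "u \<in> insert w (\<Union>i<3. subtree h (i # w))"
  then show "u \<in> subtree h w"
    using assms(1) unfolding subtree_def by (auto intro: exI[of _ "_ @ [_]"])
qed

lemma subtree_eq_three_children:
  assumes "w \<in> ctt_verts h" "length w < h" "distinct [x, y, z]" "{x, y, z} \<subseteq> {..<3}"
  shows "subtree h w = insert w (subtree h (x # w) \<union> subtree h (y # w) \<union> subtree h (z # w))"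
proof -
  have "(\<Union>i<3. subtree h (i # w)) = (\<Union>i\<in>{x, y, z}. subtree h (i # w))"
    using three_children[OF assms(3,4)] by simp
  then show ?thesis
    using subtree_eq_children[OF assms(1,2)] by (simp add: Un_assoc)
qed

lemma card_subtree:
  assumes "w \<in> ctt_verts h"
  shows "card (subtree h w) = ctt_size (h - length w)"
  using assms
proof (induction "h - length w" arbitrary: w)
  case 0
  then have "length w = h"
    unfolding ctt_verts_def by auto
  then show ?case
    using subtree_leaf[OF 0(2)] by simp
next
  case (Suc d)
  then have w: "length w < h"
    by simp
  have "card (subtree h (i # w)) = ctt_size d" if "i < 3" for i
  proof -
    have "d = h - length (i # w)"
      using Suc.hyps(2) by simp
    then show ?thesis
      using Suc.hyps(1) Cons_in_ctt_verts[OF Suc.prems w that] by simp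
  qed
  then have "card (\<Union>i<3. subtree h (i # w)) = 3 * ctt_size d"
    by (subst card_UN_disjoint) (auto simp: finite_subtree subtree_Cons_disjoint)
  then have "card (subtree h w) = ctt_size (Suc d)"
    unfolding subtree_eq_children[OF Suc.prems w] ctt_size_Suc
    by (subst card_insert_disjoint) (auto simp: finite_subtree root_notin_subtree_Cons)
  then show ?case
    using Suc.hyps(2) by simp
qed

section \<open>Blow-ups of graphs and their isomorphisms\<close>

lemma simple_graph_edgeD:
  assumes "simple_graph V E" "{a, b} \<in> E"
  shows "a \<noteq> b" "a \<in> V" "b \<in> V"
proof -
  have "\<exists>u v. {a, b} = {u, v} \<and> u \<noteq> v \<and> u \<in> V \<and> v \<in> V"
    using assms unfolding simple_graph_def by (rule bspec)
  then obtain u v where "{a, b} = {u, v}" "u \<noteq> v" "u \<in> V" "v \<in> V"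
    by (elim exE conjE)
  then show "a \<noteq> b" "a \<in> V" "b \<in> V"
    unfolding doubleton_eq_iff by auto
qed

lemma simple_graph_edge_subset:
  assumes "simple_graph V E" "e \<in> E"
  shows "e \<subseteq> V"
proof -
  have "\<exists>u v. e = {u, v} \<and> u \<noteq> v \<and> u \<in> V \<and> v \<in> V"
    using assms unfolding simple_graph_def by (rule bspec)
  then show ?thesis
    by (elim exE conjE) simp
qed

lemma TH_edges_fibreI: "v \<in> VT \<Longrightarrow> {i, j} \<in> EH \<Longrightarrow> {(v, i), (v, j)} \<in> TH_edges VT ET m EH"
  unfolding TH_edges_def by blast

lemma TH_edges_rowI: "{u, v} \<in> ET \<Longrightarrow> i \<in> {1..m} \<Longrightarrow> {(u, i), (v, i)} \<in> TH_edges VT ET m EH"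
  unfolding TH_edges_def by blast

lemma TH_edgesE:
  assumes "e \<in> TH_edges VT ET m EH"
  obtains (fibre) v i j where "e = {(v, i), (v, j)}" "v \<in> VT" "{i, j} \<in> EH"
    | (row) u v i where "e = {(u, i), (v, i)}" "{u, v} \<in> ET" "i \<in> {1..m}"
  using assms unfolding TH_edges_def by blast

lemma rtrancl_edges_change:
  assumes "(a, b) \<in> {(x, y). {x, y} \<in> E}\<^sup>*" "P a" "\<not> P b"
  obtains c d where "{c, d} \<in> E" "P c" "\<not> P d"
  using assms by (induction rule: rtrancl_induct) auto

lemma simple_graph_TH:
  assumes "simple_graph VT ET" "simple_graph {1..m} EH"
  shows "simple_graph (TH_verts VT m) (TH_edges VT ET m EH)"
  unfolding simple_graph_def
proof
  fix e
  assume "e \<in> TH_edges VT ET m EH"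
  then show "\<exists>x y. e = {x, y} \<and> x \<noteq> y \<and> x \<in> TH_verts VT m \<and> y \<in> TH_verts VT m"
  proof (cases rule: TH_edgesE)
    case (fibre v i j)
    then show ?thesis
      using simple_graph_edgeD[OF assms(2) fibre(3)] unfolding TH_verts_def by blast
  next
    case (row u v i)
    then show ?thesis
      using simple_graph_edgeD[OF assms(1) row(2)] unfolding TH_verts_def by blast
  qed
qed

lemma TH_edges_pullback:
  assumes f: "bij_betw f VT VT'" and edges: "\<forall>u\<in>VT. \<forall>v\<in>VT. {u, v} \<in> ET \<longleftrightarrow> {f u, f v} \<in> ET'"
    and simple: "simple_graph VT' ET'"
    and e: "e \<subseteq> TH_verts VT m" "map_prod f id ` e \<in> TH_edges VT' ET' m EH"
  shows "e \<in> TH_edges VT ET m EH"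
proof -
  define g where "g = inv_into VT f"
  have g: "g v \<in> VT" "f (g v) = v" if "v \<in> VT'" for v
    using that f unfolding g_def by (metis bij_betw_def inv_into_into, simp add: bij_betw_inv_into_right)
  have "map_prod g id (map_prod f id z) = z" if "z \<in> e" for z
    using that e(1) f unfolding g_def TH_verts_def by (cases z) (auto simp: bij_betw_inv_into_left)
  then have "map_prod g id ` map_prod f id ` e = id ` e"
    unfolding image_image by (intro image_cong) simp_all
  then have e_eq: "e = map_prod g id ` map_prod f id ` e"
    by simp
  from e(2) show ?thesis
  proof (cases rule: TH_edgesE)
    case (fibre v i j)
    then have "e = {(g v, i), (g v, j)}"
      using e_eq by simp
    then show ?thesis
      using g(1)[OF fibre(2)] fibre(3) by (simp add: TH_edges_fibreI)
  next
    case (row u v i)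
    have "u \<in> VT'" "v \<in> VT'"
      using simple_graph_edgeD[OF simple row(2)] by auto
    then have "{g u, g v} \<in> ET"
      using edges g row(2) by metis
    moreover have "e = {(g u, i), (g v, i)}"
      using e_eq row(1) by simp
    ultimately show ?thesis
      using row(3) by (simp add: TH_edges_rowI)
  qed
qed

lemma is_matching_mono: "EG \<subseteq> EG' \<Longrightarrow> is_matching EG M \<Longrightarrow> is_matching EG' M"
  unfolding is_matching_def by blast

lemma supports_pullback:
  assumes f: "bij_betw f VG VG'" and SV: "set SV \<subseteq> VG"
    and e: "e \<subseteq> VG'" "supports VG' (map f SV) k e"
  shows "supports VG SV k (inv_into VG f ` e)"
proof -
  let ?g = "inv_into VG f"
  have g_f: "?g (f x) = x" if "x \<in> VG" for x
    using f that by (simp add: bij_betw_inv_into_left)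
  have f_g: "f (?g y) = y" "?g y \<in> VG" if "y \<in> VG'" for y
    using f that by (simp add: bij_betw_inv_into_right, metis bij_betw_def inv_into_into)
  have g_f_image: "?g ` f ` X = X" if "X \<subseteq> set SV" for X
    using f SV that by (simp add: bij_betw_def inv_into_image_cancel)
  have take_g: "?g ` set (take k (map f SV)) = set (take k SV)"
    using g_f_image[of "set (take k SV)"] by (simp add: take_map set_take_subset)
  have drop_g: "?g ` set (drop k (map f SV)) = set (drop k SV)"
    using g_f_image[of "set (drop k SV)"] by (simp add: drop_map set_drop_subset)
  have SV_g: "?g ` set (map f SV) = set SV"
    using g_f_image[of "set SV"] by simp
  obtain u v where uv: "e = {u, v}"
    and cases: "u \<in> set (take k (map f SV)) \<and> v \<in> set (drop k (map f SV))
      \<or> u \<in> set (map f SV) \<and> v \<in> VG' - set (map f SV)"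
    using e(2) unfolding supports_def by blast
  have "?g u \<in> set (take k SV) \<and> ?g v \<in> set (drop k SV) \<or> ?g u \<in> set SV \<and> ?g v \<in> VG - set SV"
  proof (cases "u \<in> set (take k (map f SV)) \<and> v \<in> set (drop k (map f SV))")
    case True
    then show ?thesis
      using take_g drop_g by blast
  next
    case False
    then have "u \<in> set (map f SV)" "v \<in> VG'" "v \<notin> set (map f SV)"
      using cases by auto
    moreover have "?g v \<notin> set SV"
      using f_g(1)[OF \<open>v \<in> VG'\<close>] \<open>v \<notin> set (map f SV)\<close> by force
    ultimately show ?thesis
      using SV_g f_g(2) by blast
  qed
  then show ?thesis
    unfolding supports_def uv by auto
qed

lemma witnessing_pullback:
  assumes f: "bij_betw f VG VG'" and SV: "set SV \<subseteq> VG"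
    and edges: "\<And>e. e \<subseteq> VG \<Longrightarrow> f ` e \<in> EG' \<Longrightarrow> e \<in> EG"
    and simple: "simple_graph VG' EG'"
    and M': "witnessing VG' EG' (map f SV) M'"
  shows "witnessing VG EG SV ((`) (inv_into VG f) ` M')" "card ((`) (inv_into VG f) ` M') = card M'"
proof -
  let ?g = "inv_into VG f"
  obtain k where k: "k \<le> length SV" "\<forall>e\<in>M'. supports VG' (map f SV) k e"
    and match: "M' \<subseteq> EG'" "\<forall>e\<in>M'. \<forall>e'\<in>M'. e \<noteq> e' \<longrightarrow> e \<inter> e' = {}"
    using M' unfolding witnessing_def is_matching_def by auto
  have sub: "e \<subseteq> VG'" if "e \<in> M'" for e
    using simple_graph_edge_subset[OF simple] match(1) that by blast
  have inj: "inj_on ?g VG'"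
    using f by (simp add: bij_betw_def inj_on_inv_into)
  have g_edge: "?g ` e \<in> EG" if "e \<in> M'" for e
  proof (rule edges)
    show "?g ` e \<subseteq> VG"
      using f sub[OF that] by (auto simp: bij_betw_def intro: inv_into_into)
    show "f ` ?g ` e \<in> EG'"
      using f sub[OF that] match(1) that by (auto simp: image_inv_into_cancel bij_betw_def)
  qed
  have "inj_on ((`) ?g) M'"
    using inj sub by (blast intro: inj_on_image inj_on_subset)
  then show "card ((`) ?g ` M') = card M'"
    by (rule card_image)
  show "witnessing VG EG SV ((`) ?g ` M')"
    unfolding witnessing_def is_matching_def
  proof (intro conjI exI[of _ k] ballI impI)
    show "(`) ?g ` M' \<subseteq> EG"
      using g_edge by blast
    show "k \<le> length SV"
      by (rule k(1))
  next
    fix e e'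
    assume "e \<in> (`) ?g ` M'" "e' \<in> (`) ?g ` M'" "e \<noteq> e'"
    then obtain d d' where "d \<in> M'" "d' \<in> M'" "e = ?g ` d" "e' = ?g ` d'" "d \<noteq> d'"
      by blast
    then show "e \<inter> e' = {}"
      using match(2) inj_on_image_Int[OF inj sub sub, of d d'] by simp
  next
    fix e
    assume "e \<in> (`) ?g ` M'"
    then show "supports VG SV k e"
      using supports_pullback[OF f SV sub] k(2) by blast
  qed
qed

lemma TH_witnessing_pullback:
  assumes f: "bij_betw f VT VT'" and edges: "\<forall>u\<in>VT. \<forall>v\<in>VT. {u, v} \<in> ET \<longleftrightarrow> {f u, f v} \<in> ET'"
    and simple: "simple_graph VT' ET'" "simple_graph {1..m} EH"
    and SV: "set SV \<subseteq> TH_verts VT m"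
    and M': "witnessing (TH_verts VT' m) (TH_edges VT' ET' m EH) (map (map_prod f id) SV) M'"
  obtains M where "witnessing (TH_verts VT m) (TH_edges VT ET m EH) SV M" "card M = card M'"
proof -
  have "bij_betw (map_prod f id) (TH_verts VT m) (TH_verts VT' m)"
    unfolding TH_verts_def by (rule bij_betw_map_prod[OF f bij_betw_id])
  then show ?thesis
    using witnessing_pullback[OF _ SV TH_edges_pullback[OF f edges simple(1)] simple_graph_TH[OF simple] M']
      that by blast
qed

lemma card_OC_map_prod:
  assumes "bij_betw f VT VT'" "V \<subseteq> TH_verts VT m"
  shows "card (OC VT' (map_prod f id ` V)) = card (OC VT V)"
proof -
  have "OC VT' (map_prod f id ` V) = f ` OC VT V"
    using assms unfolding OC_def TH_verts_def bij_betw_def by force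
  moreover have "inj_on f (OC VT V)"
    using assms(1) unfolding bij_betw_def OC_def by (auto intro: inj_on_subset)
  ultimately show ?thesis
    by (simp add: card_image)
qed

section \<open>Sides of a split and two-sided matchings\<close>

datatype side = Prefix | Suffix | Outside

locale ordered_blowup =
  fixes h m p :: nat and EH :: "nat set set" and SV :: "(nat list \<times> nat) list"
  assumes p_pos: "0 < p" and m_ge: "2 * p \<le> m"
    and simple_H: "simple_graph {1..m} EH" and connected_H: "connected_graph {1..m} EH"
    and SV_subset: "set SV \<subseteq> TH_verts (ctt_verts h) m"
begin

abbreviation blowup_edges :: "(nat list \<times> nat) set set" where
  "blowup_edges \<equiv> TH_edges (ctt_verts h) (ctt_edges h) m EH"

abbreviation occupied :: "nat list set" where
  "occupied \<equiv> OC (ctt_verts h) (set SV)"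

definition side_of :: "nat \<Rightarrow> nat list \<times> nat \<Rightarrow> side" where
  "side_of k x = (if x \<in> set (take k SV) then Prefix else if x \<in> set SV then Suffix else Outside)"

definition cut_edge :: "nat \<Rightarrow> nat list set \<Rightarrow> (nat list \<times> nat) set \<Rightarrow> bool" where
  "cut_edge k S e \<longleftrightarrow> (\<exists>x y. e = {x, y} \<and> {x, y} \<in> blowup_edges \<and> side_of k x \<noteq> side_of k y \<and>
     fst x \<in> S \<and> fst y \<in> S)"

definition cut_matching :: "nat \<Rightarrow> nat list set \<Rightarrow> nat \<Rightarrow> bool" where
  "cut_matching k S n \<longleftrightarrow> (\<exists>M. finite M \<and> n \<le> card M \<and> is_matching (Collect (cut_edge k S)) M)"

lemma side_of_Outside_iff: "side_of k x = Outside \<longleftrightarrow> x \<notin> set SV"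
  unfolding side_of_def by (auto dest: in_set_takeD)

lemma cut_edge_in_edges: "cut_edge k S e \<Longrightarrow> e \<in> blowup_edges"
  unfolding cut_edge_def by (elim exE conjE) simp

lemma side_of_Prefix: "side_of k z = Prefix \<Longrightarrow> z \<in> set (take k SV)"
  unfolding side_of_def by (simp split: if_splits)

lemma side_of_Suffix: "side_of k z = Suffix \<Longrightarrow> z \<in> set (drop k SV)"
proof -
  assume "side_of k z = Suffix"
  then have "z \<in> set SV" "z \<notin> set (take k SV)"
    unfolding side_of_def by (simp_all split: if_splits)
  then show ?thesis
    using set_append[of "take k SV" "drop k SV"] by simp
qed

lemma cut_edge_supports:
  assumes "cut_edge k S e"
  shows "supports (TH_verts (ctt_verts h) m) SV k e"
proof -
  let ?V = "TH_verts (ctt_verts h) m"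
  obtain x y where e: "e = {x, y}" "{x, y} \<in> blowup_edges" "side_of k x \<noteq> side_of k y"
    using assms unfolding cut_edge_def by (elim exE conjE) simp
  have in_V: "x \<in> ?V" "y \<in> ?V"
    using simple_graph_edgeD[OF simple_graph_TH[OF simple_graph_ctt simple_H] e(2)] by auto
  have supported: "supports ?V SV k {u, v}"
    if "u \<in> {x, y}" "v \<in> {x, y}" "side_of k u \<noteq> Outside" "side_of k v \<noteq> side_of k u"
      "side_of k u = Prefix \<or> side_of k v = Outside" for u v
  proof (cases "side_of k v = Outside")
    case True
    have "u \<in> set SV" "v \<in> ?V - set SV"
      using True that(1-3) in_V side_of_Outside_iff by auto
    then show ?thesis
      unfolding supports_def by (intro exI[of _ u] exI[of _ v]) simp
  next
    case False
    then have "side_of k u = Prefix" "side_of k v = Suffix"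
      using that(4,5) by (cases "side_of k v"; auto)+
    then show ?thesis
      unfolding supports_def by (intro exI[of _ u] exI[of _ v]) (simp add: side_of_Prefix side_of_Suffix)
  qed
  consider "side_of k x = Prefix \<or> side_of k y = Outside" "side_of k x \<noteq> Outside"
    | "side_of k y = Prefix \<or> side_of k x = Outside" "side_of k y \<noteq> Outside"
    using e(3) by (cases "side_of k x"; cases "side_of k y") simp_all
  then show ?thesis
  proof cases
    case 1
    then show ?thesis
      using supported[of x y] e(1,3) by simp
  next
    case 2
    then show ?thesis
      using supported[of y x] e(1,3) by (simp add: insert_commute)
  qed
qed

lemma cut_edge_fst: "cut_edge k S e \<Longrightarrow> z \<in> e \<Longrightarrow> fst z \<in> S"
  unfolding cut_edge_def by (elim exE conjE) auto

lemma cut_edge_mono: "cut_edge k S e \<Longrightarrow> S \<subseteq> S' \<Longrightarrow> cut_edge k S' e"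
  unfolding cut_edge_def by (elim exE conjE) (intro exI conjI, assumption+, auto)

lemma cut_matching_0: "cut_matching k S 0"
  unfolding cut_matching_def is_matching_def by (rule exI[of _ "{}"]) simp

lemma cut_matching_le: "cut_matching k S n \<Longrightarrow> n' \<le> n \<Longrightarrow> cut_matching k S n'"
  unfolding cut_matching_def by (meson order.trans)

lemma cut_matching_mono:
  assumes "cut_matching k S n" "S \<subseteq> S'"
  shows "cut_matching k S' n"
proof -
  have "Collect (cut_edge k S) \<subseteq> Collect (cut_edge k S')"
    using cut_edge_mono[OF _ assms(2)] by blast
  then show ?thesis
    using assms(1) unfolding cut_matching_def is_matching_def by (meson order.trans)
qed

lemma cut_matching_Un:
  assumes "cut_matching k S a" "cut_matching k S' b" "S \<inter> S' = {}"
  shows "cut_matching k (S \<union> S') (a + b)"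
proof -
  obtain M where M: "finite M" "a \<le> card M" "\<forall>e\<in>M. cut_edge k S e"
      "\<forall>e\<in>M. \<forall>e'\<in>M. e \<noteq> e' \<longrightarrow> e \<inter> e' = {}"
    using assms(1) unfolding cut_matching_def is_matching_def by auto
  obtain M' where M': "finite M'" "b \<le> card M'" "\<forall>e\<in>M'. cut_edge k S' e"
      "\<forall>e\<in>M'. \<forall>e'\<in>M'. e \<noteq> e' \<longrightarrow> e \<inter> e' = {}"
    using assms(2) unfolding cut_matching_def is_matching_def by auto
  have apart: "e \<inter> e' = {}" if "e \<in> M" "e' \<in> M'" for e e'
    using M(3) M'(3) assms(3) cut_edge_fst that by blast
  have "e \<noteq> {}" if "e \<in> M" for e
    using M(3) that unfolding cut_edge_def by auto
  then have "M \<inter> M' = {}"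
    using apart by blast
  then have "card (M \<union> M') = card M + card M'"
    using M(1) M'(1) by (simp add: card_Un_disjoint)
  moreover have "\<forall>e\<in>M \<union> M'. cut_edge k (S \<union> S') e"
    using M(3) M'(3) cut_edge_mono by blast
  moreover have "\<forall>e\<in>M \<union> M'. \<forall>e'\<in>M \<union> M'. e \<noteq> e' \<longrightarrow> e \<inter> e' = {}"
    using M(4) M'(4) apart by (metis Int_commute Un_iff)
  ultimately show ?thesis
    unfolding cut_matching_def is_matching_def using M(1,2) M'(1,2)
    by (intro exI[of _ "M \<union> M'"]) auto
qed

lemma cut_matching_of_classes:
  fixes \<pi> :: "nat list \<times> nat \<Rightarrow> 'b"
  assumes "finite I" and edge: "\<And>i. i \<in> I \<Longrightarrow> \<exists>e. cut_edge k S e \<and> (\<forall>z\<in>e. \<pi> z = i)"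
  shows "cut_matching k S (card I)"
proof -
  obtain ed where ed: "\<And>i. i \<in> I \<Longrightarrow> cut_edge k S (ed i) \<and> (\<forall>z\<in>ed i. \<pi> z = i)"
    using edge by metis
  have "ed i \<noteq> {}" if "i \<in> I" for i
    using ed[OF that] unfolding cut_edge_def by auto
  then have "inj_on ed I"
    using ed by (metis equals0I inj_onI)
  then have "card (ed ` I) = card I"
    by (rule card_image)
  moreover have "ed i \<inter> ed j = {}" if "i \<in> I" "j \<in> I" "ed i \<noteq> ed j" for i j
    using ed[OF that(1)] ed[OF that(2)] that(3) by (metis disjoint_iff)
  ultimately show ?thesis
    unfolding cut_matching_def is_matching_def using assms(1) ed
    by (intro exI[of _ "ed ` I"]) auto
qed

lemma fibre_cut_edge:
  assumes "u \<in> ctt_verts h" "a \<in> {1..m}" "b \<in> {1..m}" "side_of k (u, a) \<noteq> side_of k (u, b)"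
  shows "\<exists>e. cut_edge k {u} e \<and> (\<forall>z\<in>e. fst z = u)"
proof -
  have "(a, b) \<in> {(x, y). {x, y} \<in> EH}\<^sup>*"
    using connected_H assms(2,3) unfolding connected_graph_def by blast
  then obtain c d where cd: "{c, d} \<in> EH" "side_of k (u, c) = side_of k (u, a)" "side_of k (u, d) \<noteq> side_of k (u, a)"
    by (rule rtrancl_edges_change[where P = "\<lambda>c. side_of k (u, c) = side_of k (u, a)"]) (use assms(4) in auto)
  then have "{(u, c), (u, d)} \<in> blowup_edges"
    using assms(1) by (simp add: TH_edges_fibreI)
  then have "cut_edge k {u} {(u, c), (u, d)}"
    unfolding cut_edge_def using cd(2,3) by (intro exI[of _ "(u, c)"] exI[of _ "(u, d)"]) simp
  then show ?thesis
    by auto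
qed

lemma cut_matching_fibres:
  assumes "finite U" "U \<subseteq> ctt_verts h"
    and "\<And>u. u \<in> U \<Longrightarrow> \<exists>a\<in>{1..m}. \<exists>b\<in>{1..m}. side_of k (u, a) \<noteq> side_of k (u, b)"
  shows "cut_matching k U (card U)"
proof (rule cut_matching_of_classes[where \<pi> = fst, OF assms(1)])
  fix u
  assume "u \<in> U"
  then obtain e where "cut_edge k {u} e" "\<forall>z\<in>e. fst z = u"
    using fibre_cut_edge assms(2,3) by blast
  then show "\<exists>e. cut_edge k U e \<and> (\<forall>z\<in>e. fst z = u)"
    using cut_edge_mono \<open>u \<in> U\<close> by blast
qed

definition parent_closed :: "nat list set \<Rightarrow> nat list \<Rightarrow> bool" where
  "parent_closed R r \<longleftrightarrow> r \<in> R \<and> R \<subseteq> ctt_verts h \<and> (\<forall>u\<in>R. \<exists>ys. u = ys @ r) \<and>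
     (\<forall>u\<in>R. u \<noteq> r \<longrightarrow> tl u \<in> R)"

lemma parent_closed_subtree: "w \<in> ctt_verts h \<Longrightarrow> parent_closed (subtree h w) w"
  unfolding parent_closed_def using root_in_subtree subtree_subset tl_in_subtree
  by (auto simp: subtree_def)

lemma parent_closed_subtree_minus_child:
  assumes "w \<in> ctt_verts h"
  shows "parent_closed (subtree h w - subtree h (i # w)) w"
  unfolding parent_closed_def
proof (intro conjI ballI impI)
  show "w \<in> subtree h w - subtree h (i # w)"
    using root_in_subtree[OF assms] root_notin_subtree_Cons by simp
  show "subtree h w - subtree h (i # w) \<subseteq> ctt_verts h"
    using subtree_subset by blast
  fix u
  assume u: "u \<in> subtree h w - subtree h (i # w)"
  then show "\<exists>ys. u = ys @ w"
    unfolding subtree_def by auto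
  assume "u \<noteq> w"
  then have "u \<noteq> []"
    using u unfolding subtree_def by auto
  then show "tl u \<in> subtree h w - subtree h (i # w)"
    using u \<open>u \<noteq> w\<close> tl_in_subtree in_subtree_if_tl_in_subtree subtree_subset by blast
qed

lemma cut_edge_to_root:
  assumes R: "parent_closed R r" and "u \<in> R" "i \<in> {1..m}" "side_of k (u, i) \<noteq> side_of k (r, i)"
  shows "\<exists>e. cut_edge k R e \<and> (\<forall>z\<in>e. snd z = i)"
  using assms(2,4)
proof (induction "length u" arbitrary: u rule: less_induct)
  case less
  then have "u \<noteq> r"
    by auto
  then have parent: "tl u \<in> R" "u \<noteq> []" "u \<in> ctt_verts h"
    using R less.prems(1) unfolding parent_closed_def by auto
  show ?case
  proof (cases "side_of k (tl u, i) = side_of k (u, i)")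
    case True
    then show ?thesis
      using less.hyps[of "tl u"] parent less.prems(2) by simp
  next
    case False
    have "{(tl u, i), (u, i)} \<in> blowup_edges"
      using parent assms(3) by (simp add: TH_edges_rowI ctt_parent_edge)
    then have "cut_edge k R {(tl u, i), (u, i)}"
      unfolding cut_edge_def using False parent less.prems(1)
      by (intro exI[of _ "(tl u, i)"] exI[of _ "(u, i)"]) simp
    then show ?thesis
      by auto
  qed
qed

lemma cut_matching_rows:
  assumes R: "parent_closed R r" and "I \<subseteq> {1..m}"
    and "\<And>i. i \<in> I \<Longrightarrow> \<exists>u\<in>R. \<exists>v\<in>R. side_of k (u, i) \<noteq> side_of k (v, i)"
  shows "cut_matching k R (card I)"
proof (rule cut_matching_of_classes[where \<pi> = snd])
  show "finite I"
    using assms(2) finite_subset by blast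
  fix i
  assume i: "i \<in> I"
  then obtain u v where "u \<in> R" "v \<in> R" "side_of k (u, i) \<noteq> side_of k (v, i)"
    using assms(3) by blast
  then show "\<exists>e. cut_edge k R e \<and> (\<forall>z\<in>e. snd z = i)"
    using cut_edge_to_root[OF R] i assms(2) by (metis subsetD)
qed

section \<open>Balanced and sparse sets of tree vertices\<close>

definition uniform_rows :: "nat \<Rightarrow> nat list set \<Rightarrow> side \<Rightarrow> nat set" where
  "uniform_rows k R X = {i \<in> {1..m}. \<forall>u\<in>R. side_of k (u, i) = X}"

definition dominates :: "nat \<Rightarrow> nat list set \<Rightarrow> side \<Rightarrow> bool" where
  "dominates k R X \<longleftrightarrow> m - p < card (uniform_rows k R X)"

definition balanced :: "nat \<Rightarrow> nat list set \<Rightarrow> bool" where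
  "balanced k R \<longleftrightarrow> (\<forall>X. \<not> dominates k R X)"

definition sparse :: "nat list set \<Rightarrow> bool" where
  "sparse R \<longleftrightarrow> dominates 0 R Outside"

lemma finite_uniform_rows: "finite (uniform_rows k R X)"
  unfolding uniform_rows_def by simp

lemma uniform_rows_subset: "uniform_rows k R X \<subseteq> {1..m}"
  unfolding uniform_rows_def by blast

lemma dominates_Outside_iff_sparse: "dominates k R Outside \<longleftrightarrow> sparse R"
  unfolding sparse_def dominates_def uniform_rows_def side_of_Outside_iff ..

lemma dominates_subset: "R' \<subseteq> R \<Longrightarrow> dominates k R X \<Longrightarrow> dominates k R' X"
  unfolding dominates_def
  by (erule order.strict_trans2, intro card_mono finite_uniform_rows) (auto simp: uniform_rows_def)

lemma card_uniform_rows_add_le: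
  assumes "R \<noteq> {}" "X \<noteq> Y"
  shows "card (uniform_rows k R X) + card (uniform_rows k R Y) \<le> m"
proof -
  have "uniform_rows k R X \<inter> uniform_rows k R Y = {}"
    using assms unfolding uniform_rows_def by auto
  then have "card (uniform_rows k R X) + card (uniform_rows k R Y) = card (uniform_rows k R X \<union> uniform_rows k R Y)"
    by (simp add: card_Un_disjoint finite_uniform_rows)
  also have "\<dots> \<le> card {1..m}"
    using uniform_rows_subset by (intro card_mono) auto
  finally show ?thesis
    by simp
qed

lemma dominates_unique:
  assumes "R \<noteq> {}" "dominates k R X" "dominates k R Y"
  shows "X = Y"
  using card_uniform_rows_add_le[OF assms(1), of X Y k] assms(2,3) m_ge unfolding dominates_def by linarith

lemma balanced_mono: "R' \<subseteq> R \<Longrightarrow> balanced k R' \<Longrightarrow> balanced k R"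
  unfolding balanced_def using dominates_subset by blast

lemma balanced_if_sparse_and_dense:
  assumes "P \<subseteq> R" "Q \<subseteq> R" "P \<noteq> {}" "sparse P" "\<not> sparse Q"
  shows "balanced k R"
  unfolding balanced_def
proof
  fix X
  show "\<not> dominates k R X"
  proof
    assume dom: "dominates k R X"
    show False
    proof (cases "X = Outside")
      case True
      then show False
        using dominates_subset[OF assms(2) dom] assms(5) dominates_Outside_iff_sparse by blast
    next
      case False
      have "dominates k P Outside"
        using assms(4) dominates_Outside_iff_sparse by blast
      then show False
        using dominates_unique[OF assms(3) dominates_subset[OF assms(1) dom]] False by blast
    qed
  qed
qed

lemma dominates_Prefix_mono:
  assumes "k \<le> k'" "dominates k R Prefix"
  shows "dominates k' R Prefix"
proof -
  have "side_of k x = Prefix \<Longrightarrow> side_of k' x = Prefix" for x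
    using set_take_subset_set_take[OF assms(1), of SV] unfolding side_of_def by (auto split: if_splits)
  then have "uniform_rows k R Prefix \<subseteq> uniform_rows k' R Prefix"
    unfolding uniform_rows_def by blast
  then show ?thesis
    using assms(2) card_mono[OF finite_uniform_rows] unfolding dominates_def by (meson order.strict_trans2)
qed

lemma dominates_Suffix_antimono:
  assumes "k \<le> k'" "dominates k' R Suffix"
  shows "dominates k R Suffix"
proof -
  have "side_of k' x = Suffix \<Longrightarrow> side_of k x = Suffix" for x
    using set_take_subset_set_take[OF assms(1), of SV] unfolding side_of_def by (auto split: if_splits)
  then have "uniform_rows k' R Suffix \<subseteq> uniform_rows k R Suffix"
    unfolding uniform_rows_def by blast
  then show ?thesis
    using assms(2) card_mono[OF finite_uniform_rows] unfolding dominates_def by (meson order.strict_trans2)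
qed

lemma cut_matching_monochromatic_rows:
  assumes R: "finite R" "R \<subseteq> ctt_verts h" "r \<in> R" and "balanced k R"
    and J: "J \<subseteq> {1..m}" "m - p < card J"
    and mono: "\<And>i u. i \<in> J \<Longrightarrow> u \<in> R \<Longrightarrow> side_of k (u, i) = side_of k (r, i)"
  shows "cut_matching k R (card R)"
proof -
  obtain i0 where i0: "i0 \<in> J"
    using J(2) by fastforce
  have "\<not> J \<subseteq> uniform_rows k R (side_of k (r, i0))"
    using J(2) assms(4) card_mono[OF finite_uniform_rows]
    unfolding balanced_def dominates_def by (meson order.strict_trans2)
  then obtain j u where "j \<in> J" "u \<in> R" "side_of k (u, j) \<noteq> side_of k (r, i0)"
    using J(1) unfolding uniform_rows_def by blast
  then have j: "j \<in> J" "side_of k (r, j) \<noteq> side_of k (r, i0)"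
    using mono by metis+
  show ?thesis
  proof (rule cut_matching_fibres[OF R(1,2)])
    fix u
    assume "u \<in> R"
    then have "side_of k (u, i0) \<noteq> side_of k (u, j)"
      using mono[OF i0] mono[OF j(1)] j(2) by simp
    then show "\<exists>a\<in>{1..m}. \<exists>b\<in>{1..m}. side_of k (u, a) \<noteq> side_of k (u, b)"
      using i0 j(1) J(1) by blast
  qed
qed

lemma balanced_cut_matching:
  assumes R: "parent_closed R r" and "p \<le> card R" "balanced k R"
  shows "cut_matching k R p"
proof -
  define I where "I = {i \<in> {1..m}. \<exists>u\<in>R. \<exists>v\<in>R. side_of k (u, i) \<noteq> side_of k (v, i)}"
  show ?thesis
  proof (cases "p \<le> card I")
    case True
    have "cut_matching k R (card I)"
      by (rule cut_matching_rows[OF R]) (auto simp: I_def)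
    then show ?thesis
      using True by (rule cut_matching_le)
  next
    case False
    have "card ({1..m} - I) = m - card I"
      by (subst card_Diff_subset) (auto simp: I_def)
    then have "m - p < card ({1..m} - I)"
      using False m_ge by linarith
    moreover have "finite R" "R \<subseteq> ctt_verts h" "r \<in> R"
      using R finite_ctt_verts finite_subset unfolding parent_closed_def by auto
    ultimately have "cut_matching k R (card R)"
      using cut_matching_monochromatic_rows[OF _ _ _ assms(3), where J = "{1..m} - I"] unfolding I_def by blast
    then show ?thesis
      using assms(2) by (rule cut_matching_le)
  qed
qed

definition full :: "nat list \<Rightarrow> bool" where
  "full u \<longleftrightarrow> (\<forall>i\<in>{1..m}. (u, i) \<in> set SV)"

definition occupancy :: "nat list set \<Rightarrow> nat" where
  "occupancy S = card (occupied \<inter> S)"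

lemma occupied_iff: "u \<in> occupied \<longleftrightarrow> u \<in> ctt_verts h \<and> (\<exists>i. (u, i) \<in> set SV)"
  unfolding OC_def by simp

lemma occupied_subset: "occupied \<subseteq> ctt_verts h"
  unfolding OC_def by blast

lemma partial_fibre_sides:
  assumes "u \<in> occupied" "\<not> full u"
  shows "\<exists>a\<in>{1..m}. \<exists>b\<in>{1..m}. side_of k (u, a) \<noteq> side_of k (u, b)"
proof -
  obtain i where i: "(u, i) \<in> set SV"
    using assms(1) occupied_iff by blast
  then have "i \<in> {1..m}"
    using SV_subset unfolding TH_verts_def by auto
  moreover obtain j where "j \<in> {1..m}" "(u, j) \<notin> set SV"
    using assms(2) unfolding full_def by blast
  ultimately show ?thesis
    using i side_of_Outside_iff by metis
qed

lemma cut_matching_partial: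
  assumes "U \<subseteq> ctt_verts h"
  shows "cut_matching k U (card {u \<in> U. u \<in> occupied \<and> \<not> full u})"
proof -
  have "cut_matching k {u \<in> U. u \<in> occupied \<and> \<not> full u} (card {u \<in> U. u \<in> occupied \<and> \<not> full u})"
    using assms partial_fibre_sides
    by (intro cut_matching_fibres) (auto intro: finite_subset[OF _ finite_ctt_verts])
  then show ?thesis
    by (rule cut_matching_mono) blast
qed

lemma cut_matching_vertex:
  assumes "u \<in> ctt_verts h"
  shows "cut_matching k {u} (if u \<in> occupied \<and> \<not> full u then 1 else 0)"
proof (cases "u \<in> occupied \<and> \<not> full u")
  case True
  then have "{v \<in> {u}. v \<in> occupied \<and> \<not> full v} = {u}"
    by blast
  then show ?thesis
    using cut_matching_partial[of "{u}" k] assms True by simp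
next
  case False
  then show ?thesis
    using cut_matching_0 by presburger
qed

lemma sparse_not_full:
  assumes "sparse R" "u \<in> R"
  shows "\<not> full u"
proof -
  have "uniform_rows 0 R Outside \<noteq> {}"
    using assms(1) unfolding sparse_def dominates_def by fastforce
  then obtain j where "j \<in> uniform_rows 0 R Outside"
    by blast
  then show ?thesis
    using assms(2) unfolding uniform_rows_def full_def side_of_Outside_iff by blast
qed

lemma full_not_sparse: "full u \<Longrightarrow> \<not> sparse {u}"
  using sparse_not_full by blast

lemma sparse_cut_matching:
  assumes "R \<subseteq> ctt_verts h" "sparse R"
  shows "cut_matching k R (occupancy R)"
proof -
  have "{u \<in> R. u \<in> occupied \<and> \<not> full u} = occupied \<inter> R"
    using sparse_not_full[OF assms(2)] by blast
  then show ?thesis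
    using cut_matching_partial[OF assms(1), of k] unfolding occupancy_def by simp
qed

lemma dense_unoccupied_cut_matching:
  assumes R: "parent_closed R r" and "\<not> sparse R" "v \<in> R" "v \<notin> occupied"
  shows "cut_matching k R p"
proof -
  have "v \<in> ctt_verts h"
    using R assms(3) unfolding parent_closed_def by blast
  then have v_out: "side_of k (v, i) = Outside" for i
    using assms(4) occupied_iff side_of_Outside_iff by blast
  define I where "I = {1..m} - uniform_rows k R Outside"
  have "card I = m - card (uniform_rows k R Outside)"
    unfolding I_def using uniform_rows_subset by (subst card_Diff_subset) (auto simp: finite_uniform_rows)
  moreover have "card (uniform_rows k R Outside) \<le> m - p"
    using assms(2) dominates_Outside_iff_sparse[of k R] unfolding dominates_def by linarith
  ultimately have "p \<le> card I"
    using m_ge by linarith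
  moreover have "cut_matching k R (card I)"
  proof (rule cut_matching_rows[OF R])
    show "I \<subseteq> {1..m}"
      unfolding I_def by blast
    fix i
    assume "i \<in> I"
    then obtain u where "u \<in> R" "side_of k (u, i) \<noteq> Outside"
      unfolding I_def uniform_rows_def by auto
    then show "\<exists>u\<in>R. \<exists>v\<in>R. side_of k (u, i) \<noteq> side_of k (v, i)"
      using assms(3) v_out by metis
  qed
  ultimately show ?thesis
    using cut_matching_le by blast
qed

lemma card_uniform_rows_Suffix_le:
  "card (uniform_rows k R Suffix) \<le> card (uniform_rows (Suc k) R Suffix) + 1"
proof -
  let ?D = "uniform_rows k R Suffix - uniform_rows (Suc k) R Suffix"
  have "?D \<subseteq> {snd (SV ! k)}"
  proof
    fix i
    assume "i \<in> ?D"
    then obtain u where u: "side_of k (u, i) = Suffix" "side_of (Suc k) (u, i) \<noteq> Suffix"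
      unfolding uniform_rows_def by auto
    then have new: "(u, i) \<in> set (take (Suc k) SV)" "(u, i) \<notin> set (take k SV)"
      unfolding side_of_def by (auto split: if_splits)
    then have "k < length SV"
      by (metis not_less take_all le_SucI)
    then have "(u, i) = SV ! k"
      using new by (simp add: take_Suc_conv_app_nth)
    then show "i \<in> {snd (SV ! k)}"
      by (metis singletonI snd_conv)
  qed
  then have "card ?D \<le> 1"
    using card_mono[of "{snd (SV ! k)}" ?D] by simp
  moreover have "card (uniform_rows k R Suffix) \<le> card ?D + card (uniform_rows (Suc k) R Suffix)"
    using card_Un_le[of ?D "uniform_rows (Suc k) R Suffix"]
      card_mono[of "?D \<union> uniform_rows (Suc k) R Suffix" "uniform_rows k R Suffix"]
    by (simp add: finite_uniform_rows)
  ultimately show ?thesis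
    by linarith
qed

lemma balanced_split_exists:
  assumes "R \<noteq> {}" "\<not> sparse R"
  shows "\<exists>k\<le>length SV. balanced k R"
proof -
  have no_Outside: "\<not> dominates k R Outside" for k
    using assms(2) dominates_Outside_iff_sparse by blast
  have sides: "X = Prefix \<or> X = Suffix \<or> X = Outside" for X
    by (cases X) auto
  show ?thesis
  proof (cases "dominates 0 R Suffix")
    case False
    have "uniform_rows 0 R Prefix = {}"
      using assms(1) unfolding uniform_rows_def side_of_def by auto
    then have "balanced 0 R"
      unfolding balanced_def dominates_def using False no_Outside sides
      by (metis card.empty dominates_def less_nat_zero_code)
    then show ?thesis
      by blast
  next
    case True
    have "uniform_rows (length SV) R Suffix = {}"
      using assms(1) unfolding uniform_rows_def side_of_def by auto
    then have end_ok: "\<not> dominates (length SV) R Suffix"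
      unfolding dominates_def by simp
    define k where "k = (LEAST k. \<not> dominates k R Suffix)"
    have k: "\<not> dominates k R Suffix" "k \<le> length SV"
      unfolding k_def using end_ok by (rule LeastI, rule Least_le)
    then obtain k0 where k0: "k = Suc k0"
      using True by (cases k) auto
    then have "dominates k0 R Suffix"
      using not_less_Least[of k0 "\<lambda>k. \<not> dominates k R Suffix"] unfolding k_def by auto
    then have "m - p \<le> card (uniform_rows k R Suffix)"
      using card_uniform_rows_Suffix_le[of k0 R] unfolding dominates_def k0 by linarith
    then have "\<not> dominates k R Prefix"
      using card_uniform_rows_add_le[OF assms(1), of Prefix Suffix k] m_ge unfolding dominates_def by simp
    then have "balanced k R"
      unfolding balanced_def using k(1) no_Outside sides by metis
    then show ?thesis
      using k(2) by blast
  qed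
qed

lemma occupancy_le_card: "finite S \<Longrightarrow> occupancy S \<le> card S"
  unfolding occupancy_def by (intro card_mono) auto

lemma occupancy_eq_card: "S \<subseteq> occupied \<Longrightarrow> occupancy S = card S"
  unfolding occupancy_def by (simp add: Int_absorb1)

lemma occupancy_subtree:
  assumes w: "w \<in> ctt_verts h" "length w < h" and xyz: "distinct [x, y, z]" "{x, y, z} \<subseteq> {..<3}"
  shows "occupancy (subtree h w) = (if w \<in> occupied then 1 else 0)
    + occupancy (subtree h (x # w)) + occupancy (subtree h (y # w)) + occupancy (subtree h (z # w))"
proof -
  let ?O = "\<lambda>i. occupied \<inter> subtree h (i # w)"
  have fin: "finite (?O i)" for i
    using finite_subtree by blast
  have "occupied \<inter> subtree h w = (occupied \<inter> {w}) \<union> (?O x \<union> ?O y \<union> ?O z)"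
    using subtree_eq_three_children[OF w xyz] by auto
  moreover have "?O x \<inter> ?O y = {}" "(?O x \<union> ?O y) \<inter> ?O z = {}"
    using subtree_Cons_disjoint[of x y h w] subtree_Cons_disjoint[of x z h w]
      subtree_Cons_disjoint[of y z h w] xyz(1) by auto
  moreover have "(occupied \<inter> {w}) \<inter> (?O x \<union> ?O y \<union> ?O z) = {}"
    using root_notin_subtree_Cons by auto
  ultimately have "card (occupied \<inter> subtree h w) = card (occupied \<inter> {w}) + (card (?O x) + card (?O y) + card (?O z))"
    using fin by (simp add: card_Un_disjoint)
  moreover have "card (occupied \<inter> {w}) = (if w \<in> occupied then 1 else 0)"
    by auto
  ultimately show ?thesis
    unfolding occupancy_def by simp
qed

lemma cut_matching_subtree:
  assumes w: "w \<in> ctt_verts h" "length w < h" and xyz: "distinct [x, y, z]" "{x, y, z} \<subseteq> {..<3}"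
    and "cut_matching k {w} e" "cut_matching k (subtree h (x # w)) a"
      "cut_matching k (subtree h (y # w)) b" "cut_matching k (subtree h (z # w)) c"
  shows "cut_matching k (subtree h w) (e + a + b + c)"
proof -
  have "cut_matching k (subtree h (x # w) \<union> subtree h (y # w)) (a + b)"
    using cut_matching_Un assms(6,7) subtree_Cons_disjoint xyz(1) by simp
  then have "cut_matching k (subtree h (x # w) \<union> subtree h (y # w) \<union> subtree h (z # w)) (a + b + c)"
    using cut_matching_Un assms(8) subtree_Cons_disjoint xyz(1) by (simp add: Int_Un_distrib2)
  then have "cut_matching k ({w} \<union> (subtree h (x # w) \<union> subtree h (y # w) \<union> subtree h (z # w))) (e + (a + b + c))"
    by (rule cut_matching_Un[OF assms(5)]) (use root_notin_subtree_Cons in auto)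
  then show ?thesis
    using subtree_eq_three_children[OF w xyz] by (simp add: add.assoc)
qed

lemma cut_matching_extend_by_rest:
  assumes w: "w \<in> ctt_verts h" and "balanced k (subtree h w - subtree h (j # w))"
    and "p \<le> card (subtree h w - subtree h (j # w))" and "cut_matching k (subtree h (j # w)) a"
  shows "cut_matching k (subtree h w) (a + p)"
proof -
  have "cut_matching k (subtree h w - subtree h (j # w)) p"
    using balanced_cut_matching[OF parent_closed_subtree_minus_child[OF w] assms(3,2)] .
  then have "cut_matching k (subtree h (j # w) \<union> (subtree h w - subtree h (j # w))) (a + p)"
    using cut_matching_Un[OF assms(4)] by blast
  then show ?thesis
    using subtree_Cons_subset by (simp add: Un_absorb1)
qed

lemma balanced_middle_child:
  assumes w: "w \<in> ctt_verts h" "length w < h" and xyz: "distinct [x, y, z]" "{x, y, z} \<subseteq> {..<3}"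
    and x: "\<not> sparse (subtree h (x # w))" "p \<le> card (subtree h (x # w))"
    and bal: "balanced kx (subtree h (x # w))" "balanced ky (subtree h (y # w))" "balanced kz (subtree h (z # w))"
    and ks: "kx \<le> ky" "ky \<le> kz"
    and match: "cut_matching ky (subtree h (y # w)) n"
  shows "balanced ky (subtree h w) \<and> cut_matching ky (subtree h w) (n + p)"
proof -
  let ?R = "subtree h w - subtree h (y # w)"
  have XR: "subtree h (x # w) \<subseteq> ?R" and ZR: "subtree h (z # w) \<subseteq> ?R"
    using subtree_eq_three_children[OF w xyz] subtree_Cons_disjoint[of x y h w]
      subtree_Cons_disjoint[of y z h w] xyz(1) by auto
  have "\<not> dominates ky ?R X" for X
  proof
    assume dom: "dominates ky ?R X"
    show False
    proof (cases X)
      case Prefix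
      then have "dominates kz (subtree h (z # w)) Prefix"
        using dominates_Prefix_mono[OF ks(2)] dominates_subset[OF ZR dom] by simp
      then show False
        using bal(3) unfolding balanced_def by blast
    next
      case Suffix
      then have "dominates kx (subtree h (x # w)) Suffix"
        using dominates_Suffix_antimono[OF ks(1)] dominates_subset[OF XR dom] by simp
      then show False
        using bal(1) unfolding balanced_def by blast
    next
      case Outside
      then show False
        using dominates_subset[OF XR dom] x(1) dominates_Outside_iff_sparse by simp
    qed
  qed
  then have "balanced ky ?R"
    unfolding balanced_def by blast
  moreover have "p \<le> card ?R"
    using x(2) card_mono[OF _ XR] finite_subtree by (meson finite_Diff order.trans)
  ultimately have "cut_matching ky (subtree h w) (n + p)"
    using cut_matching_extend_by_rest[OF w(1)] match by blast
  moreover have "balanced ky (subtree h w)"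
    using balanced_mono[OF subtree_Cons_subset bal(2)] .
  ultimately show ?thesis
    by blast
qed

lemma balanced_median_child:
  assumes w: "w \<in> ctt_verts h" "length w < h" and xyz: "distinct [x, y, z]" "{x, y, z} \<subseteq> {..<3}"
    and x: "\<not> sparse (subtree h (x # w))" "p \<le> card (subtree h (x # w))"
    and z: "\<not> sparse (subtree h (z # w))" "p \<le> card (subtree h (z # w))"
    and bal: "balanced kx (subtree h (x # w))" "balanced ky (subtree h (y # w))" "balanced kz (subtree h (z # w))"
    and ks: "kx \<le> ky \<and> ky \<le> kz \<or> kz \<le> ky \<and> ky \<le> kx"
    and match: "cut_matching ky (subtree h (y # w)) n"
  shows "balanced ky (subtree h w) \<and> cut_matching ky (subtree h w) (n + p)"
proof -
  have zyx: "distinct [z, y, x]" "{z, y, x} \<subseteq> {..<3}"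
    using xyz by auto
  from ks show ?thesis
    using balanced_middle_child[OF w xyz x bal _ _ match]
      balanced_middle_child[OF w zyx z bal(3,2,1) _ _ match] by blast
qed

section \<open>Induction over subtrees\<close>

abbreviation budget :: "nat \<Rightarrow> nat" where
  "budget \<equiv> window_count p (tr p)"

lemma p_less_window_start: "p < window_start (tr p) 0"
  using less_ctt_size_Suc_tr[OF p_pos] by (simp add: window_start_def)

lemma budget_triple: "budget (3 * a + 1) \<le> budget a + p"
  by (rule window_count_triple[OF p_less_window_start])

definition balanced_cut :: "nat list set \<Rightarrow> nat \<Rightarrow> bool" where
  "balanced_cut R n \<longleftrightarrow> (\<exists>k\<le>length SV. balanced k R \<and> cut_matching k R n)"

abbreviation budgeted :: "nat list set \<Rightarrow> bool" where
  "budgeted R \<equiv> balanced_cut R (budget (occupancy R))"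

lemma balanced_cut_le: "balanced_cut R n \<Longrightarrow> n' \<le> n \<Longrightarrow> balanced_cut R n'"
  unfolding balanced_cut_def using cut_matching_le by blast

lemma child_size_if_budget_nonzero:
  assumes w: "w \<in> ctt_verts h" "length w < h" and "budget (occupancy (subtree h w)) \<noteq> 0"
  shows "p < ctt_size (h - Suc (length w))"
proof -
  let ?d = "h - Suc (length w)"
  have "window_start (tr p) 0 < occupancy (subtree h w)"
    using assms(3) window_count_eq_0 not_less by blast
  also have "\<dots> \<le> ctt_size (Suc ?d)"
    using occupancy_le_card[OF finite_subtree] card_subtree[OF w(1)] w(2)
    by (metis Suc_diff_Suc)
  finally have "tr p + 1 \<le> ?d"
    unfolding window_start_def by simp
  then have "window_start (tr p) 0 \<le> ctt_size ?d"
    unfolding window_start_def by simp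
  then show ?thesis
    using p_less_window_start by linarith
qed

end

locale heavy_child_step = ordered_blowup +
  fixes w :: "nat list" and j c d kj :: nat
  assumes w: "w \<in> ctt_verts h" "length w < h"
    and jcd: "distinct [j, c, d]" "{j, c, d} \<subseteq> {..<3}"
    and big: "p < ctt_size (h - Suc (length w))"
    and J: "\<not> sparse (subtree h (j # w))" "kj \<le> length SV" "balanced kj (subtree h (j # w))"
      "cut_matching kj (subtree h (j # w)) (budget (occupancy (subtree h (j # w))))"
    and c_max: "\<not> sparse (subtree h (c # w)) \<Longrightarrow> occupancy (subtree h (c # w)) \<le> occupancy (subtree h (j # w))"
    and d_max: "\<not> sparse (subtree h (d # w)) \<Longrightarrow> occupancy (subtree h (d # w)) \<le> occupancy (subtree h (j # w))"
begin

abbreviation "S \<equiv> subtree h w"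
abbreviation "J \<equiv> subtree h (j # w)"
abbreviation "P \<equiv> subtree h (c # w)"
abbreviation "Q \<equiv> subtree h (d # w)"
abbreviation "root_weight \<equiv> (if w \<in> occupied \<and> \<not> full w then 1 else 0 :: nat)"

lemma card_child: "i \<in> {j, c, d} \<Longrightarrow> card (subtree h (i # w)) = ctt_size (h - Suc (length w))"
  using card_subtree[OF Cons_in_ctt_verts[OF w]] jcd(2) by auto

lemma occupancy_child_le: "i \<in> {j, c, d} \<Longrightarrow> occupancy (subtree h (i # w)) \<le> ctt_size (h - Suc (length w))"
  using occupancy_le_card[OF finite_subtree] card_child by metis

lemma occupancy_S: "occupancy S = (if w \<in> occupied then 1 else 0) + occupancy J + occupancy P + occupancy Q"
  by (rule occupancy_subtree[OF w jcd])

lemma children_in_rest: "P \<subseteq> S - J" "Q \<subseteq> S - J" "w \<in> S - J"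
  using subtree_eq_three_children[OF w jcd] subtree_Cons_disjoint[of j c h w]
    subtree_Cons_disjoint[of j d h w] root_notin_subtree_Cons[of w h j] jcd(1) by auto

lemma p_le_card_rest: "p \<le> card (S - J)"
  using card_mono[OF _ children_in_rest(1)] card_child[of c] big finite_subtree by fastforce

lemma budgeted_via_J: "cut_matching kj S (budget (occupancy S)) \<Longrightarrow> budgeted S"
  unfolding balanced_cut_def using J(2) balanced_mono[OF subtree_Cons_subset J(3)] by blast

lemma cut_matching_extend_J: "balanced kj (S - J) \<Longrightarrow> cut_matching kj S (budget (occupancy J) + p)"
  using cut_matching_extend_by_rest[OF w(1) _ p_le_card_rest J(4)] by blast

lemma cut_matching_children:
  "cut_matching kj P b \<Longrightarrow> cut_matching kj Q b' \<Longrightarrow> cut_matching kj S (root_weight + budget (occupancy J) + b + b')"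
  using cut_matching_subtree[OF w jcd cut_matching_vertex[OF w(1)] J(4)] by blast

lemma budgeted_if_sparse_sparse:
  assumes "sparse P" "sparse Q"
  shows "budgeted S"
proof -
  have children: "cut_matching kj S (root_weight + budget (occupancy J) + occupancy P + occupancy Q)"
    using cut_matching_children sparse_cut_matching[OF subtree_subset] assms by blast
  show ?thesis
  proof (cases "full w")
    case True
    then have "w \<in> occupied"
      using w(1) m_ge p_pos unfolding full_def occupied_iff by fastforce
    then have n: "occupancy S = occupancy J + (occupancy P + occupancy Q) + 1"
      using occupancy_S by simp
    have "balanced kj (S - J)"
      using balanced_if_sparse_and_dense[of P "S - J" "{w}"] children_in_rest assms(1)
        full_not_sparse[OF True] root_in_subtree[OF Cons_in_ctt_verts[OF w]] jcd(2) by fastforce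
    then have "cut_matching kj S (budget (occupancy J) + p)"
      by (rule cut_matching_extend_J)
    moreover have "budget (occupancy S) \<le> budget (occupancy J) + max p (occupancy P + occupancy Q)"
      unfolding n by (rule window_count_gap[OF p_less_window_start])
    ultimately show ?thesis
      using children True budgeted_via_J cut_matching_le by (cases "p \<le> occupancy P + occupancy Q") auto
  next
    case False
    then have "budget (occupancy S) \<le> budget (occupancy J) + (root_weight + occupancy P + occupancy Q)"
      using window_count_add_le[of p "tr p" "occupancy J" "root_weight + occupancy P + occupancy Q"] occupancy_S
      by (simp add: ac_simps)
    then show ?thesis
      using children budgeted_via_J cut_matching_le by (simp add: ac_simps)
  qed
qed

lemma occupied_child:
  assumes "i \<in> {c, d}" "subtree h (i # w) \<subseteq> occupied" "\<not> sparse (subtree h (i # w))"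
  shows "occupancy (subtree h (i # w)) = ctt_size (h - Suc (length w))" "occupancy J = ctt_size (h - Suc (length w))"
proof -
  show full_i: "occupancy (subtree h (i # w)) = ctt_size (h - Suc (length w))"
    using occupancy_eq_card[OF assms(2)] card_child assms(1) by auto
  then show "occupancy J = ctt_size (h - Suc (length w))"
    using occupancy_child_le[of j] c_max d_max assms(1,3) by fastforce
qed

lemma budget_le_if_dense_dense:
  assumes "\<not> sparse P" "\<not> sparse Q"
  shows "budget (occupancy S) \<le> budget (occupancy J) + p"
proof -
  have "occupancy S \<le> 3 * occupancy J + 1"
    using occupancy_S c_max d_max assms by simp
  then show ?thesis
    using window_count_mono budget_triple order.trans by blast
qed

lemma budgeted_if_sparse_dense:
  assumes "sparse P" "\<not> sparse Q"
  shows "budgeted S"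
proof -
  have "balanced kj (S - J)"
    using balanced_if_sparse_and_dense[of P "S - J" Q] children_in_rest assms
      root_in_subtree[OF Cons_in_ctt_verts[OF w]] jcd(2) by fastforce
  then have extended: "cut_matching kj S (budget (occupancy J) + p)"
    by (rule cut_matching_extend_J)
  have n: "occupancy S \<le> 1 + occupancy J + occupancy P + occupancy Q" "occupancy Q \<le> occupancy J"
    using occupancy_S d_max assms(2) by auto
  show ?thesis
  proof (cases "Q \<subseteq> occupied")
    case False
    then obtain v where "v \<in> Q" "v \<notin> occupied"
      by blast
    then have "cut_matching kj Q p"
      using dense_unoccupied_cut_matching[OF parent_closed_subtree[OF Cons_in_ctt_verts[OF w]] assms(2)]
        jcd(2) by simp
    then have m: "cut_matching kj S (root_weight + budget (occupancy J) + occupancy P + p)"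
      using cut_matching_children sparse_cut_matching[OF subtree_subset assms(1)] by blast
    have "budget (occupancy S) \<le> budget (2 * occupancy J + 1 + occupancy P)"
      using n by (intro window_count_mono) simp
    also have "\<dots> \<le> budget (3 * occupancy J + 1) + occupancy P"
      using window_count_add_le[of p "tr p" "2 * occupancy J + 1" "occupancy P"]
        window_count_mono[of "2 * occupancy J + 1" "3 * occupancy J + 1" p "tr p"] by simp
    also have "\<dots> \<le> budget (occupancy J) + p + occupancy P"
      using budget_triple by simp
    finally show ?thesis
      using m budgeted_via_J cut_matching_le by (simp add: ac_simps)
  next
    case True
    then have "occupancy J = ctt_size (h - Suc (length w))"
      using occupied_child(2) assms(2) by blast
    then have "occupancy S \<le> 3 * occupancy J + 1"
      using n occupancy_child_le[of c] by simp
    then have "budget (occupancy S) \<le> budget (occupancy J) + p"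
      using window_count_mono budget_triple order.trans by blast
    then show ?thesis
      using extended budgeted_via_J cut_matching_le by blast
  qed
qed

lemma balanced_cut_if_child_unoccupied:
  assumes i: "i \<in> {c, d}" "\<not> sparse (subtree h (i # w))" "\<not> subtree h (i # w) \<subseteq> occupied"
  shows "balanced_cut S (budget (occupancy J) + p)"
proof -
  have "cut_matching kj (subtree h (i # w)) p"
    using dense_unoccupied_cut_matching[OF parent_closed_subtree[OF Cons_in_ctt_verts[OF w]] i(2)]
      i(1,3) jcd(2) by auto
  then have "cut_matching kj S (root_weight + budget (occupancy J) + p + 0)
      \<or> cut_matching kj S (root_weight + budget (occupancy J) + 0 + p)"
    using i(1) cut_matching_children cut_matching_0 by blast
  then have "cut_matching kj S (budget (occupancy J) + p)"
    using cut_matching_le by fastforce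
  then show ?thesis
    unfolding balanced_cut_def using J(2) balanced_mono[OF subtree_Cons_subset J(3)] by blast
qed

lemma balanced_cut_if_children_occupied:
  assumes dense: "\<not> sparse P" "\<not> sparse Q" and IH: "budgeted P" "budgeted Q"
    and occupied: "P \<subseteq> occupied" "Q \<subseteq> occupied"
  shows "balanced_cut S (budget (occupancy J) + p)"
proof -
  have occ: "occupancy P = occupancy J" "occupancy Q = occupancy J"
    using occupied_child[of c] occupied_child[of d] dense occupied by auto
  obtain kc where kc: "kc \<le> length SV" "balanced kc P" "cut_matching kc P (budget (occupancy J))"
    using IH(1) occ(1) unfolding balanced_cut_def by auto
  obtain kd where kd: "kd \<le> length SV" "balanced kd Q" "cut_matching kd Q (budget (occupancy J))"
    using IH(2) occ(2) unfolding balanced_cut_def by auto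
  have big_child: "p \<le> card (subtree h (i # w))" if "i \<in> {j, c, d}" for i
    using card_child[OF that] big by simp
  have perms: "distinct [c, j, d]" "{c, j, d} \<subseteq> {..<3}" "distinct [j, c, d]" "{j, c, d} \<subseteq> {..<3}"
      "distinct [j, d, c]" "{j, d, c} \<subseteq> {..<3}"
    using jcd by auto
  consider "kc \<le> kj \<and> kj \<le> kd \<or> kd \<le> kj \<and> kj \<le> kc"
    | "kj \<le> kc \<and> kc \<le> kd \<or> kd \<le> kc \<and> kc \<le> kj"
    | "kj \<le> kd \<and> kd \<le> kc \<or> kc \<le> kd \<and> kd \<le> kj"
    by linarith
  then show ?thesis
  proof cases
    case 1
    then show ?thesis
      using balanced_median_child[OF w perms(1,2) dense(1) big_child[of c] dense(2) big_child[of d]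
          kc(2) J(3) kd(2) _ J(4)] J(2) unfolding balanced_cut_def by auto
  next
    case 2
    then show ?thesis
      using balanced_median_child[OF w perms(3,4) J(1) big_child[of j] dense(2) big_child[of d]
          J(3) kc(2) kd(2) _ kc(3)] kc(1) unfolding balanced_cut_def by auto
  next
    case 3
    then show ?thesis
      using balanced_median_child[OF w perms(5,6) J(1) big_child[of j] dense(1) big_child[of c]
          J(3) kd(2) kc(2) _ kd(3)] kd(1) unfolding balanced_cut_def by auto
  qed
qed

lemma budgeted_if_dense_dense:
  assumes dense: "\<not> sparse P" "\<not> sparse Q" and IH: "budgeted P" "budgeted Q"
  shows "budgeted S"
proof -
  have "balanced_cut S (budget (occupancy J) + p)"
    using balanced_cut_if_child_unoccupied[of c] balanced_cut_if_child_unoccupied[of d]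
      balanced_cut_if_children_occupied[OF dense IH] dense by blast
  then show ?thesis
    using balanced_cut_le budget_le_if_dense_dense[OF dense] by blast
qed

end

context ordered_blowup
begin

lemma budgeted_if_children_sparse:
  assumes w: "w \<in> ctt_verts h" "length w < h" and dense: "\<not> sparse (subtree h w)"
    and sparse: "\<And>i. i < 3 \<Longrightarrow> sparse (subtree h (i # w))"
  shows "budgeted (subtree h w)"
proof -
  have ijk: "distinct [0, 1, 2 :: nat]" "{0, 1, 2 :: nat} \<subseteq> {..<3}"
    by auto
  define s where "s = occupancy (subtree h (0 # w)) + occupancy (subtree h (1 # w)) + occupancy (subtree h (2 # w))"
  obtain k where k: "k \<le> length SV" "balanced k (subtree h w)"
    using balanced_split_exists dense root_in_subtree[OF w(1)] by blast
  have "cut_matching k (subtree h w) ((if w \<in> occupied \<and> \<not> full w then 1 else 0) + s)"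
    using cut_matching_subtree[OF w ijk cut_matching_vertex[OF w(1)]]
      sparse_cut_matching[OF subtree_subset sparse] unfolding s_def by (simp add: add.assoc)
  moreover have "budget (occupancy (subtree h w)) \<le> (if w \<in> occupied \<and> \<not> full w then 1 else 0) + s"
  proof (cases "w \<in> occupied \<and> full w")
    case True
    have "budget 1 = 0"
      using window_count_eq_0[of 1 "tr p" p] less_ctt_size[of "Suc (tr p)"] by (simp add: window_start_def)
    moreover have "occupancy (subtree h w) = 1 + s"
      using True occupancy_subtree[OF w ijk] unfolding s_def by simp
    ultimately show ?thesis
      using True window_count_add_le[of p "tr p" 1 s] by simp
  next
    case False
    then have "occupancy (subtree h w) = (if w \<in> occupied \<and> \<not> full w then 1 else 0) + s"
      using occupancy_subtree[OF w ijk] unfolding s_def by simp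
    then show ?thesis
      using window_count_le by metis
  qed
  ultimately show ?thesis
    unfolding balanced_cut_def using k cut_matching_le by blast
qed

lemma budgeted_if_child_dense:
  assumes w: "w \<in> ctt_verts h" "length w < h" and big: "p < ctt_size (h - Suc (length w))"
    and dense: "i0 < 3" "\<not> sparse (subtree h (i0 # w))"
    and IH: "\<And>i. i < 3 \<Longrightarrow> \<not> sparse (subtree h (i # w)) \<Longrightarrow> budgeted (subtree h (i # w))"
  shows "budgeted (subtree h w)"
proof -
  define A where "A = {i. i < (3::nat) \<and> \<not> sparse (subtree h (i # w))}"
  define f where "f i = occupancy (subtree h (i # w))" for i
  have "finite A" "A \<noteq> {}"
    using dense unfolding A_def by auto
  then obtain j where j: "j \<in> A" "\<And>i. i \<in> A \<Longrightarrow> f i \<le> f j"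
    using Max_in[of "f ` A"] Max_ge[of "f ` A"] by (metis (no_types, lifting) finite_imageI imageE image_is_empty image_eqI)
  define c where "c = (if j = 0 then 1 else (0::nat))"
  define d where "d = (if j = 2 then 1 else (2::nat))"
  have jcd: "distinct [j, c, d]" "{j, c, d} \<subseteq> {..<3}" "distinct [j, d, c]" "{j, d, c} \<subseteq> {..<3}"
    using j(1) unfolding A_def c_def d_def by auto
  have J: "\<not> sparse (subtree h (j # w))" "budgeted (subtree h (j # w))"
    using j(1) IH unfolding A_def by auto
  then obtain kj where kj: "kj \<le> length SV" "balanced kj (subtree h (j # w))"
      "cut_matching kj (subtree h (j # w)) (budget (occupancy (subtree h (j # w))))"
    unfolding balanced_cut_def by blast
  have max: "\<not> sparse (subtree h (i # w)) \<Longrightarrow> occupancy (subtree h (i # w)) \<le> occupancy (subtree h (j # w))"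
    if "i \<in> {c, d}" for i
    using j(2) that jcd(2) unfolding A_def f_def by blast
  interpret step: heavy_child_step h m p EH SV w j c d kj
    by unfold_locales (use w jcd big J kj max in auto)
  interpret step': heavy_child_step h m p EH SV w j d c kj
    by unfold_locales (use w jcd big J kj max in auto)
  have "c < 3" "d < 3"
    using jcd(2) by auto
  then show ?thesis
    using step.budgeted_if_sparse_sparse step.budgeted_if_sparse_dense
      step'.budgeted_if_sparse_dense step.budgeted_if_dense_dense IH by blast
qed

lemma budgeted_subtree:
  assumes "w \<in> ctt_verts h" "\<not> sparse (subtree h w)"
  shows "budgeted (subtree h w)"
  using assms
proof (induction "h - length w" arbitrary: w)
  case 0
  then have leaf: "subtree h w = {w}"
    using subtree_leaf unfolding ctt_verts_def by auto
  obtain k where "k \<le> length SV" "balanced k (subtree h w)"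
    using balanced_split_exists 0(3) leaf by blast
  moreover have "occupancy (subtree h w) \<le> 1"
    using occupancy_le_card[OF finite_subtree, of h w] leaf by simp
  then have "budget (occupancy (subtree h w)) = 0"
    using window_count_eq_0 less_ctt_size[of "Suc (tr p)"] unfolding window_start_def by simp
  ultimately show ?case
    unfolding balanced_cut_def using cut_matching_0 by auto
next
  case (Suc d)
  then have w: "w \<in> ctt_verts h" "length w < h"
    by auto
  have IH: "budgeted (subtree h (i # w))" if "i < 3" "\<not> sparse (subtree h (i # w))" for i
    using Suc.hyps Cons_in_ctt_verts[OF w that(1)] that(2) by simp
  consider "budget (occupancy (subtree h w)) = 0"
    | "p < ctt_size (h - Suc (length w))" "\<forall>i<3. sparse (subtree h (i # w))"
    | "p < ctt_size (h - Suc (length w))" "\<exists>i<3. \<not> sparse (subtree h (i # w))"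
    using child_size_if_budget_nonzero[OF w] by blast
  then show ?case
  proof cases
    case 1
    then show ?thesis
      using balanced_split_exists[OF _ Suc.prems(2)] root_in_subtree[OF w(1)] cut_matching_0
      unfolding balanced_cut_def by (metis empty_iff)
  next
    case 2
    then show ?thesis
      using budgeted_if_children_sparse[OF w Suc.prems(2)] by blast
  next
    case 3
    then show ?thesis
      using budgeted_if_child_dense[OF w] IH by blast
  qed
qed

lemma mult_half_le_budget:
  assumes "0 < N"
  shows "p * ((tr N - tr p) div 2) \<le> budget N"
proof (cases "(tr N - tr p) div 2 = 0")
  case False
  then have "tr p + 2 * ((tr N - tr p) div 2) \<le> tr N"
    by linarith
  then have "ctt_size (tr p + 2 * ((tr N - tr p) div 2)) \<le> ctt_size (tr N)"
    by simp
  also have "\<dots> \<le> N"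
    using ctt_size_tr_le[OF assms] .
  finally have "budget (ctt_size (tr p + 2 * ((tr N - tr p) div 2))) \<le> budget N"
    by (rule window_count_mono)
  then show ?thesis
    using window_count_ctt_size[OF p_less_window_start] by (meson order.trans)
qed simp

lemma cut_matching_whole_tree: "\<exists>k\<le>length SV. cut_matching k (ctt_verts h) (budget (card occupied))"
proof -
  have whole: "subtree h [] = ctt_verts h" "[] \<in> ctt_verts h"
    unfolding subtree_def ctt_verts_def by auto
  have occ: "occupancy (ctt_verts h) = card occupied"
    unfolding occupancy_def using occupied_subset by (simp add: Int_absorb2)
  show ?thesis
  proof (cases "sparse (ctt_verts h)")
    case True
    then have "cut_matching 0 (ctt_verts h) (card occupied)"
      using sparse_cut_matching[OF subset_refl True, of 0] occ by simp
    then show ?thesis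
      using window_count_le cut_matching_le by blast
  next
    case False
    then show ?thesis
      using budgeted_subtree[OF whole(2)] occ unfolding whole(1) balanced_cut_def by auto
  qed
qed

lemma witnessing_if_cut_matching:
  assumes "k \<le> length SV" "cut_matching k (ctt_verts h) n"
  shows "\<exists>M. witnessing (TH_verts (ctt_verts h) m) blowup_edges SV M \<and> n \<le> card M"
proof -
  obtain M where M: "n \<le> card M" "is_matching (Collect (cut_edge k (ctt_verts h))) M"
    using assms(2) unfolding cut_matching_def by blast
  have "witnessing (TH_verts (ctt_verts h) m) blowup_edges SV M"
    unfolding witnessing_def
  proof (intro conjI exI[of _ k] ballI)
    show "is_matching blowup_edges M"
      using is_matching_mono[OF _ M(2)] cut_edge_in_edges by blast
    show "supports (TH_verts (ctt_verts h) m) SV k e" if "e \<in> M" for e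
      using M(2) that cut_edge_supports unfolding is_matching_def by blast
  qed (rule assms(1))
  then show ?thesis
    using M(1) by blast
qed

lemma witnessing_matching_canonical:
  assumes "occupied \<noteq> {}"
  shows "\<exists>M. witnessing (TH_verts (ctt_verts h) m) blowup_edges SV M \<and>
    p * ((tr (card occupied) - tr p) div 2) \<le> card M"
proof -
  have "0 < card occupied"
    using assms finite_subset[OF occupied_subset finite_ctt_verts] card_gt_0_iff by blast
  then have "p * ((tr (card occupied) - tr p) div 2) \<le> budget (card occupied)"
    by (rule mult_half_le_budget)
  then show ?thesis
    using cut_matching_whole_tree witnessing_if_cut_matching cut_matching_le by meson
qed

end

lemma int_mult_half_diff_le: "int p * ((int x - int q) div 2) \<le> int (p * ((x - q) div 2))"
proof (cases "q \<le> x")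
  case True
  then have "(int x - int q) div 2 = int ((x - q) div 2)"
    by (simp add: of_nat_diff zdiv_int)
  then show ?thesis
    by simp
next
  case False
  then have "(int x - int q) div 2 \<le> 0"
    by simp
  then show ?thesis
    by (simp add: mult_nonneg_nonpos)
qed

theorem theorem1:
  fixes p h m :: nat and VT :: "'a set" and ET :: "'a set set" and EH :: "nat set set"
    and V :: "('a \<times> nat) set" and SV :: "('a \<times> nat) list"
  assumes "p > 0"
    and "complete_ternary_tree VT ET h"
    and "simple_graph {1..m} EH" and "connected_graph {1..m} EH" and "m \<ge> 2 * p"
    and "V \<subseteq> TH_verts VT m"
    and "card (OC VT V) \<ge> p"
    and "distinct SV" and "set SV = V"
  shows "\<exists>M. witnessing (TH_verts VT m) (TH_edges VT ET m EH) SV M \<and>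
           int p * ((int (tr (card (OC VT V))) - int (tr p)) div 2) \<le> int (card M)"
  \<comment> \<open>The split argument never uses that SV is repetition-free.\<close>
proof -
  obtain f where f: "bij_betw f VT (ctt_verts h)"
    and f_edges: "\<forall>u\<in>VT. \<forall>v\<in>VT. {u, v} \<in> ET \<longleftrightarrow> {f u, f v} \<in> ctt_edges h"
    using assms(2) unfolding complete_ternary_tree_def by blast
  have SV: "set SV \<subseteq> TH_verts VT m"
    using assms(6,9) by simp
  interpret canonical: ordered_blowup h m p EH "map (map_prod f id) SV"
  proof
    show "set (map (map_prod f id) SV) \<subseteq> TH_verts (ctt_verts h) m"
      using SV f unfolding TH_verts_def bij_betw_def by auto
  qed (use assms in auto)
  have card_occ: "card canonical.occupied = card (OC VT V)"
    using card_OC_map_prod[OF f assms(6)] assms(9) by simp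
  then obtain M' where M': "witnessing (TH_verts (ctt_verts h) m) canonical.blowup_edges (map (map_prod f id) SV) M'"
      "p * ((tr (card (OC VT V)) - tr p) div 2) \<le> card M'"
    using canonical.witnessing_matching_canonical assms(1,7) by fastforce
  obtain M where M: "witnessing (TH_verts VT m) (TH_edges VT ET m EH) SV M" "card M = card M'"
    by (rule TH_witnessing_pullback[OF f f_edges simple_graph_ctt assms(3) SV M'(1)])
  have "int p * ((int (tr (card (OC VT V))) - int (tr p)) div 2) \<le> int (p * ((tr (card (OC VT V)) - tr p) div 2))"
    by (rule int_mult_half_diff_le)
  also have "\<dots> \<le> int (card M)"
    using M'(2) M(2) by (simp only: of_nat_le_iff)
  finally show ?thesis
    using M(1) by blast
qed

end
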